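(* Let $f$ be a function on $\mathbb R$ whose Fourier transform vanishes for negative arguments and which is normalised ($\int_0^\infty\frac{dp}{2p}|\tilde f(p)|^2=1$), such that $f$ and $f'$ exist and are integrable, and suppose there are constants $C>0$, $L>1$, $\alpha>1/2$, $\varepsilon>0$ with \[ |f(y)|\le\frac{C}{(-y)^{1+\varepsilon}}\ (y\le -L),\qquad |f(y)|\le \frac{C}{y^{1+\alpha}}\ (y\ge L).\] Then $\bar N[f]<\infty$, and if moreover $\varepsilon>1/2$, then $\bar N^{Th}_{2\pi}[f]<\infty$.
   Context: Fourier transforms are $\tilde g(p)=(2\pi)^{-1/2}\int g(y)e^{-ipy}dy$. With $x(y)=-\log(1+e^{-y})$, $\widetilde{\check f}(-k)=(2\pi)^{-1/2}\int_{\mathbb R} f(y)e^{ikx(y)}dy$ for $k\ge0$. Mean number of created particles: $\bar N[f]=\int_0^\infty\frac{dk}{2k}|\widetilde{\check f}(-k)|^2$. Thermal average: $\bar N^{Th}_\beta[f]=\int_0^\infty\frac{dp}{2p}\frac{|\tilde f(p)|^2}{e^{\beta p}-1}$. *)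

theory Defs
  imports "HOL-Analysis.Analysis"
begin

definition fourier :: "(real \<Rightarrow> complex) \<Rightarrow> real \<Rightarrow> complex" where
  "fourier g p = complex_of_real (1 / sqrt (2 * pi)) *
     integral\<^sup>L lborel (\<lambda>y. g y * cis (- p * y))"

definition xmap :: "real \<Rightarrow> real" where
  "xmap y = - ln (1 + exp (- y))"

text \<open>(check f)~(-k) = (2 pi)^(-1/2) \<integral> f(y) e^(i k x(y)) dy.\<close>
definition check_fourier_neg :: "(real \<Rightarrow> complex) \<Rightarrow> real \<Rightarrow> complex" where
  "check_fourier_neg f k = complex_of_real (1 / sqrt (2 * pi)) *
     integral\<^sup>L lborel (\<lambda>y. f y * cis (k * xmap y))"

definition Nbar :: "(real \<Rightarrow> complex) \<Rightarrow> ennreal" where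
  "Nbar f = (\<integral>\<^sup>+ k \<in> {0<..}. ennreal (cmod (check_fourier_neg f k) ^ 2 / (2 * k)) \<partial>lborel)"

definition Nbar_th :: "real \<Rightarrow> (real \<Rightarrow> complex) \<Rightarrow> ennreal" where
  "Nbar_th \<beta> f = (\<integral>\<^sup>+ p \<in> {0<..}.
      ennreal (cmod (fourier f p) ^ 2 / (2 * p) / (exp (\<beta> * p) - 1)) \<partial>lborel)"

end

theory Submission
  imports Defs
begin

(*
  Both quantities integrate a squared transform against dk/k over k > 0, so everything hinges
  on the size of the transforms near k = 0 and, for Nbar, as k tends to infinity.

  Near 0: the decay of f makes |f y| (1 + |y|)^g integrable for g < min alpha eps, which makes
  every integral of f y * cis (k * phi y) with |phi y| <= 1 + |y| Hoelder continuous of order g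
  in k. This covers phi y = - y (the Fourier transform) as well as phi = xmap, and both agree
  at k = 0. The Fourier transform vanishes for negative frequencies, hence at 0, so both
  transforms are O(k^g). For alpha, eps > 1/2 we may take g > 1/2; the thermal integrand is
  then O(k^(2 g - 2)) near 0, and away from 0 it is dominated by the normalised integrand.

  At infinity: split the integral defining the transform in Nbar at y = - k and y = ln k.
  The left tail is O(k^(- g)) and the right tail O((ln k)^(- g')) for some g' in (1/2, alpha).
  On the middle part, since xmap' = 1 / (1 + exp), integration by parts gains a factor 1/k,
  at the price of boundary terms and of H k / k, where H k is the integral of
  (|f'| + |f|) exp y up to ln k; by Tonelli, H k / k^2 is integrable over k >= K.
*)

section \<open>Power integrals\<close>

lemma nn_integral_powr_atLeast:
  fixes s L :: real
  assumes "s < -1" "L > 0"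
  shows "(\<integral>\<^sup>+y. ennreal (indicator {L..} y * y powr s) \<partial>lborel) = ennreal (- (L powr (s + 1)) / (s + 1))"
  using nn_integral_has_integral_lebesgue'[OF _ has_integral_powr_to_inf[OF assms]]
  by (simp add: ennreal_mult' ennreal_indicator mult.commute)

lemma integrable_powr_atLeast:
  fixes s L :: real
  assumes "s < -1" "L > 0"
  shows "integrable lborel (\<lambda>y. indicator {L..} y * y powr s)"
  using nn_integral_powr_atLeast[OF assms] by (intro integrableI_nonneg) (auto simp: indicator_def)

lemma nn_integral_powr_atLeastAtMost_0:
  fixes s c :: real
  assumes "s > -1" "c \<ge> 0"
  shows "(\<integral>\<^sup>+p. ennreal (indicator {0..c} p * p powr s) \<partial>lborel) = ennreal (c powr (s + 1) / (s + 1))"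
  using nn_integral_has_integral_lebesgue'[OF _ has_integral_powr_from_0[OF assms]]
  by (simp add: ennreal_mult' ennreal_indicator mult.commute)

lemma nn_integral_ln_powr_atLeast:
  fixes e K :: real
  assumes e: "e > 1" and K: "K > 1"
  shows "(\<integral>\<^sup>+x. ennreal (indicator {K..} x * (ln x powr (- e) / x)) \<partial>lborel)
    = ennreal (ln K powr (1 - e) / (e - 1))"
proof -
  define F where "F x = ln x powr (1 - e) / (1 - e)" for x :: real
  have "(\<integral>\<^sup>+x. ennreal (ln x powr (- e) / x) * indicator {K..} x \<partial>lborel) = 0 - F K"
  proof (rule nn_integral_FTC_atLeast)
    fix x assume "K \<le> x"
    then have x: "x > 1" using K by linarith
    show "0 \<le> ln x powr (- e) / x" using x by simp
    have "((\<lambda>x. ln x powr (1 - e)) has_real_derivative (1 - e) * ln x powr (1 - e - 1) * (1 / x)) (at x)"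
      using DERIV_fun_powr[OF DERIV_ln_divide, of x "1 - e"] x by simp
    from DERIV_cdivide[OF this, of "1 - e"]
    have "(F has_real_derivative (1 - e) * ln x powr (1 - e - 1) * (1 / x) / (1 - e)) (at x)"
      unfolding F_def[abs_def] .
    then show "(F has_real_derivative ln x powr (- e) / x) (at x)"
      using e by simp
  next
    have "((\<lambda>x. ln x powr (1 - e)) \<longlongrightarrow> 0) at_top"
      using e by (intro tendsto_neg_powr ln_at_top) auto
    then show "(F \<longlongrightarrow> 0) at_top"
      unfolding F_def[abs_def] using tendsto_divide_zero by blast
  qed simp
  also have "0 - F K = ln K powr (1 - e) / (e - 1)"
    unfolding F_def by (simp add: minus_divide_right)
  finally show ?thesis by (simp add: indicator_mult_ennreal mult.commute)
qed

lemma integrable_ln_powr_atLeast: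
  fixes e K :: real
  assumes "e > 1" "K > 1"
  shows "integrable lborel (\<lambda>x. indicator {K..} x * (ln x powr (- e) / x))"
  using nn_integral_ln_powr_atLeast[OF assms] assms
  by (intro integrableI_nonneg) (auto simp: indicator_def)

lemma nn_integral_inverse_square_atLeast:
  fixes m :: real
  assumes "m > 0"
  shows "(\<integral>\<^sup>+k. ennreal (indicator {m..} k / k\<^sup>2) \<partial>lborel) = ennreal (1 / m)"
proof -
  have "(\<integral>\<^sup>+k. ennreal (indicator {m..} k / k\<^sup>2) \<partial>lborel) = (\<integral>\<^sup>+k. ennreal (indicator {m..} k * k powr (-2)) \<partial>lborel)"
    using assms by (intro nn_integral_cong) (auto simp: indicator_def powr_minus powr_realpow divide_inverse)
  also have "\<dots> = ennreal (1 / m)"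
    using nn_integral_powr_atLeast[of "-2" m] assms by (simp add: powr_minus divide_inverse)
  finally show ?thesis .
qed

section \<open>Holder continuity of oscillatory integrals\<close>

lemma norm_cis_minus_one_le: "cmod (cis t - 1) \<le> \<bar>t\<bar>"
proof -
  have "(cmod (cis t - 1))\<^sup>2 = (cos t - 1)\<^sup>2 + (sin t)\<^sup>2"
    by (simp add: cmod_power2 cis.code)
  also have "\<dots> = 4 * (sin (t/2))\<^sup>2"
    using cos_double_sin[of "t/2"] by (simp add: power2_eq_square algebra_simps)
  also have "\<dots> \<le> 4 * (t/2)\<^sup>2"
    using abs_le_square_iff[of "sin (t/2)" "t/2"] abs_sin_x_le_abs_x[of "t/2"] by simp
  also have "\<dots> = \<bar>t\<bar>\<^sup>2" by (simp add: power2_eq_square)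
  finally show ?thesis using abs_le_square_iff[of "cmod (cis t - 1)" t] by simp
qed

lemma norm_cis_minus_one_le_powr:
  assumes "0 \<le> \<gamma>" "\<gamma> \<le> 1"
  shows "cmod (cis t - 1) \<le> 2 * \<bar>t\<bar> powr \<gamma>"
proof (cases "\<bar>t\<bar> \<le> 1")
  case True
  have "\<bar>t\<bar> \<le> \<bar>t\<bar> powr \<gamma>"
  proof (cases "t = 0")
    case False
    then have "\<bar>t\<bar> powr 1 \<le> \<bar>t\<bar> powr \<gamma>" using True assms by (intro powr_mono') auto
    then show ?thesis using False by simp
  qed simp
  then show ?thesis using norm_cis_minus_one_le[of t] by simp
next
  case False
  have "cmod (cis t - 1) \<le> 2" using norm_triangle_ineq4[of "cis t" 1] by simp
  moreover have "1 \<le> \<bar>t\<bar> powr \<gamma>" using False assms by (intro ge_one_powr_ge_zero) auto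
  ultimately show ?thesis by linarith
qed

lemma norm_cis_diff: "cmod (cis a - cis b) = cmod (cis (a - b) - 1)"
proof -
  have "cis a - cis b = cis b * (cis (a - b) - 1)"
    by (simp add: right_diff_distrib cis_mult)
  then show ?thesis by (simp add: norm_mult)
qed

lemma borel_measurable_cis [measurable]: "cis \<in> borel_measurable borel"
  by (intro borel_measurable_continuous_onI continuous_on_cis continuous_on_id)

lemma integrable_weighted_right_tail:
  fixes h :: "real \<Rightarrow> 'a::{banach, second_countable_topology}" and C L \<beta> \<gamma> :: real
  assumes h: "integrable lborel h" and L: "L \<ge> 1"
    and decay: "\<And>y. y \<ge> L \<Longrightarrow> norm (h y) \<le> C / y powr (1 + \<beta>)"
    and \<gamma>: "0 \<le> \<gamma>" "\<gamma> < \<beta>"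
  shows "integrable lborel (\<lambda>y. indicator {0..} y * (norm (h y) * (1 + y) powr \<gamma>))"
proof (rule Bochner_Integration.integrable_bound)
  define B where "B y = (1 + L) powr \<gamma> * norm (h y) + \<bar>C\<bar> * 2 powr \<gamma> * (indicator {L..} y * y powr (\<gamma> - 1 - \<beta>))" for y
  show "integrable lborel B"
    unfolding B_def using h integrable_powr_atLeast[of "\<gamma> - 1 - \<beta>" L] \<gamma> L by auto
  have [measurable]: "h \<in> borel_measurable borel" using h by auto
  show "(\<lambda>y. indicator {0..} y * (norm (h y) * (1 + y) powr \<gamma>)) \<in> borel_measurable lborel"
    by measurable
  have "\<bar>indicator {0..} y * (norm (h y) * (1 + y) powr \<gamma>)\<bar> \<le> B y" for y
  proof -
    consider "y < 0" | "0 \<le> y" "y < L" | "L \<le> y" by linarith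
    then show ?thesis
    proof cases
      case 1 then show ?thesis by (simp add: B_def)
    next
      case 2
      have "(1 + y) powr \<gamma> \<le> (1 + L) powr \<gamma>" using 2 \<gamma> by (intro powr_mono2) auto
      then show ?thesis using 2 by (simp add: B_def mult.commute mult_left_mono add_increasing2)
    next
      case 3
      then have y: "y \<ge> 1" using L by linarith
      have "norm (h y) \<le> \<bar>C\<bar> / y powr (1 + \<beta>)"
        using decay[OF 3] by (meson order_trans divide_right_mono abs_ge_self powr_ge_zero)
      then have "norm (h y) * (1 + y) powr \<gamma> \<le> \<bar>C\<bar> / y powr (1 + \<beta>) * (2 * y) powr \<gamma>"
        using y \<gamma> by (intro mult_mono powr_mono2) auto
      also have "\<dots> = \<bar>C\<bar> * 2 powr \<gamma> * y powr (\<gamma> - 1 - \<beta>)"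
        using y by (simp add: powr_mult powr_diff diff_diff_eq)
      finally show ?thesis using 3 y by (simp add: B_def add_increasing)
    qed
  qed
  then show "AE y in lborel. norm (indicator {0..} y * (norm (h y) * (1 + y) powr \<gamma>)) \<le> norm (B y)"
    by (intro AE_I2) (metis abs_ge_self order_trans real_norm_def)
qed

lemma integrable_weighted_left_tail:
  fixes h :: "real \<Rightarrow> 'a::{banach, second_countable_topology}" and C L \<beta> \<gamma> :: real
  assumes h: "integrable lborel h" and L: "L \<ge> 1"
    and decay: "\<And>y. y \<le> - L \<Longrightarrow> norm (h y) \<le> C / (- y) powr (1 + \<beta>)"
    and \<gamma>: "0 \<le> \<gamma>" "\<gamma> < \<beta>"
  shows "integrable lborel (\<lambda>y. indicator {..0} y * (norm (h y) * (1 - y) powr \<gamma>))"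
proof -
  have "integrable lborel (\<lambda>y. h (0 + (-1) * y))"
    using lborel_integrable_real_affine[OF h, of "-1" 0] by simp
  moreover have "norm (h (0 + (-1) * y)) \<le> C / y powr (1 + \<beta>)" if "y \<ge> L" for y
    using decay[of "- y"] that by simp
  ultimately have "integrable lborel (\<lambda>y. indicator {0..} y * (norm (h (0 + (-1) * y)) * (1 + y) powr \<gamma>))"
    by (rule integrable_weighted_right_tail[OF _ L _ \<gamma>])
  from lborel_integrable_real_affine[OF this, of "-1" 0] show ?thesis
    by (simp add: indicator_def)
qed

lemma integrable_weighted:
  fixes h :: "real \<Rightarrow> 'a::{banach, second_countable_topology}" and C L \<beta> \<beta>' \<gamma> :: real
  assumes h: "integrable lborel h" and L: "L \<ge> 1"
    and decay_left: "\<And>y. y \<le> - L \<Longrightarrow> norm (h y) \<le> C / (- y) powr (1 + \<beta>')"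
    and decay_right: "\<And>y. y \<ge> L \<Longrightarrow> norm (h y) \<le> C / y powr (1 + \<beta>)"
    and \<gamma>: "0 \<le> \<gamma>" "\<gamma> < \<beta>" "\<gamma> < \<beta>'"
  shows "integrable lborel (\<lambda>y. norm (h y) * (1 + \<bar>y\<bar>) powr \<gamma>)"
proof (rule Bochner_Integration.integrable_bound)
  show "integrable lborel (\<lambda>y. indicator {0..} y * (norm (h y) * (1 + y) powr \<gamma>)
      + indicator {..0} y * (norm (h y) * (1 - y) powr \<gamma>))"
    using integrable_weighted_right_tail[OF h L decay_right] integrable_weighted_left_tail[OF h L decay_left] \<gamma>
    by auto
  have [measurable]: "h \<in> borel_measurable borel" using h by auto
  show "(\<lambda>y. norm (h y) * (1 + \<bar>y\<bar>) powr \<gamma>) \<in> borel_measurable lborel" by measurable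
  show "AE y in lborel. norm (norm (h y) * (1 + \<bar>y\<bar>) powr \<gamma>) \<le> norm (indicator {0..} y * (norm (h y) * (1 + y) powr \<gamma>)
      + indicator {..0} y * (norm (h y) * (1 - y) powr \<gamma>))"
    by (intro AE_I2) (cases "y \<ge> 0"; simp add: indicator_def)
qed

lemma norm_integral_cis_diff_le:
  fixes f :: "real \<Rightarrow> complex" and \<phi> :: "real \<Rightarrow> real"
  assumes f: "integrable lborel f" and [measurable]: "\<phi> \<in> borel_measurable borel"
    and \<phi>_le: "\<And>y. \<bar>\<phi> y\<bar> \<le> 1 + \<bar>y\<bar>"
    and w: "integrable lborel (\<lambda>y. cmod (f y) * (1 + \<bar>y\<bar>) powr \<gamma>)"
    and \<gamma>: "0 \<le> \<gamma>" "\<gamma> \<le> 1"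
  shows "cmod ((LINT y|lborel. f y * cis (p * \<phi> y)) - (LINT y|lborel. f y * cis (q * \<phi> y)))
    \<le> 2 * (LINT y|lborel. cmod (f y) * (1 + \<bar>y\<bar>) powr \<gamma>) * \<bar>p - q\<bar> powr \<gamma>"
proof -
  have [measurable]: "f \<in> borel_measurable borel" using f by auto
  have int_cis: "integrable lborel (\<lambda>y. f y * cis (k * \<phi> y))" for k
    by (rule Bochner_Integration.integrable_bound[OF f]) (auto simp: norm_mult)
  have "cmod ((LINT y|lborel. f y * cis (p * \<phi> y)) - (LINT y|lborel. f y * cis (q * \<phi> y)))
      \<le> (LINT y|lborel. cmod (f y * cis (p * \<phi> y) - f y * cis (q * \<phi> y)))"
    using int_cis[of p] int_cis[of q] by (simp flip: Bochner_Integration.integral_diff)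
  also have "\<dots> \<le> (LINT y|lborel. 2 * \<bar>p - q\<bar> powr \<gamma> * (cmod (f y) * (1 + \<bar>y\<bar>) powr \<gamma>))"
  proof (rule integral_mono)
    fix y
    have "cmod (f y * cis (p * \<phi> y) - f y * cis (q * \<phi> y)) = cmod (f y) * cmod (cis ((p - q) * \<phi> y) - 1)"
      by (simp add: norm_mult norm_cis_diff left_diff_distrib flip: right_diff_distrib)
    also have "\<dots> \<le> cmod (f y) * (2 * (\<bar>p - q\<bar> powr \<gamma> * (1 + \<bar>y\<bar>) powr \<gamma>))"
    proof (intro mult_left_mono)
      have "\<bar>(p - q) * \<phi> y\<bar> powr \<gamma> \<le> \<bar>p - q\<bar> powr \<gamma> * (1 + \<bar>y\<bar>) powr \<gamma>"
        using \<phi>_le \<gamma> by (simp add: abs_mult powr_mult[symmetric] powr_mono2 mult_left_mono)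
      then show "cmod (cis ((p - q) * \<phi> y) - 1) \<le> 2 * (\<bar>p - q\<bar> powr \<gamma> * (1 + \<bar>y\<bar>) powr \<gamma>)"
        using norm_cis_minus_one_le_powr[OF \<gamma>, of "(p - q) * \<phi> y"] by linarith
    qed simp
    finally show "cmod (f y * cis (p * \<phi> y) - f y * cis (q * \<phi> y))
        \<le> 2 * \<bar>p - q\<bar> powr \<gamma> * (cmod (f y) * (1 + \<bar>y\<bar>) powr \<gamma>)"
      by (simp add: mult_ac)
  qed (use int_cis w in auto)
  also have "\<dots> = 2 * \<bar>p - q\<bar> powr \<gamma> * (LINT y|lborel. cmod (f y) * (1 + \<bar>y\<bar>) powr \<gamma>)"
    by simp
  finally show ?thesis by (simp add: mult_ac)
qed

lemma continuous_on_if_holder: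
  fixes F :: "real \<Rightarrow> 'a::real_normed_vector"
  assumes "\<And>p q. norm (F p - F q) \<le> K * \<bar>p - q\<bar> powr \<gamma>" "\<gamma> > 0"
  shows "continuous_on UNIV F"
proof -
  have "isCont F p" for p
  proof -
    have "((\<lambda>q. K * \<bar>q - p\<bar> powr \<gamma>) \<longlongrightarrow> K * \<bar>p - p\<bar> powr \<gamma>) (at p)"
      using assms(2) by (intro tendsto_intros) auto
    then have "((\<lambda>q. K * \<bar>q - p\<bar> powr \<gamma>) \<longlongrightarrow> 0) (at p)" using assms(2) by simp
    then have "((\<lambda>q. F q - F p) \<longlongrightarrow> 0) (at p)"
      by (rule Lim_null_comparison[rotated]) (use assms(1) in auto)
    then show ?thesis unfolding isCont_def by (simp add: LIM_zero_iff)
  qed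
  then show ?thesis by (simp add: continuous_on_eq_continuous_at)
qed

lemma norm_set_integral_le_weighted:
  fixes g :: "'a \<Rightarrow> 'b::{banach, second_countable_topology}" and w :: "'a \<Rightarrow> real"
  assumes g: "integrable M g" and A: "A \<in> sets M"
    and w: "integrable M (\<lambda>x. norm (g x) * w x)" "\<And>x. 0 \<le> w x"
    and s: "s > 0" "\<And>x. x \<in> A \<Longrightarrow> s \<le> w x"
  shows "norm (LINT x|M. indicator A x *\<^sub>R g x) \<le> (LINT x|M. norm (g x) * w x) / s"
proof -
  have "norm (LINT x|M. indicator A x *\<^sub>R g x) \<le> (LINT x|M. norm (indicator A x *\<^sub>R g x))"
    by (rule integral_norm_bound)
  also have "\<dots> \<le> (LINT x|M. norm (g x) * w x / s)"
  proof (rule integral_mono)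
    show "integrable M (\<lambda>x. norm (indicator A x *\<^sub>R g x))"
      using A g by (intro integrable_norm integrable_mult_indicator)
    fix x
    show "norm (indicator A x *\<^sub>R g x) \<le> norm (g x) * w x / s"
    proof (cases "x \<in> A")
      case True
      then have "norm (g x) * s \<le> norm (g x) * w x" using s by (intro mult_left_mono) auto
      then show ?thesis using True s by (simp add: le_divide_eq)
    qed (use w s in simp)
  qed (use w in auto)
  finally show ?thesis by simp
qed

lemma integrable_indicator_atMost_mult_exp:
  fixes h :: "real \<Rightarrow> real"
  assumes "integrable lborel h"
  shows "integrable lborel (\<lambda>y. indicator {..u} y * (h y * exp y))"
proof (rule Bochner_Integration.integrable_bound)
  show "integrable lborel (\<lambda>y. exp u * h y)" using assms by auto
  show "(\<lambda>y. indicator {..u} y * (h y * exp y)) \<in> borel_measurable lborel"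
    using assms by auto
  show "AE y in lborel. norm (indicator {..u} y * (h y * exp y)) \<le> norm (exp u * h y)"
    by (intro AE_I2) (auto simp: indicator_def abs_mult mult.commute[of "exp u"] intro!: mult_left_mono)
qed

lemma nn_integral_exp_over_square_le:
  fixes K y :: real
  assumes K: "K > 0"
  shows "(\<integral>\<^sup>+k. ennreal (if K \<le> k \<and> y \<le> ln k then exp y / k\<^sup>2 else 0) \<partial>lborel) \<le> 1"
proof -
  define m where "m = max K (exp y)"
  have m: "m > 0" "exp y \<le> m" using K by (auto simp: m_def)
  have "K \<le> k \<and> y \<le> ln k \<longleftrightarrow> m \<le> k" for k
    using K by (auto simp: m_def ln_ge_iff)
  then have "(\<integral>\<^sup>+k. ennreal (if K \<le> k \<and> y \<le> ln k then exp y / k\<^sup>2 else 0) \<partial>lborel)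
      = (\<integral>\<^sup>+k. ennreal (exp y) * ennreal (indicator {m..} k / k\<^sup>2) \<partial>lborel)"
    by (intro nn_integral_cong) (simp add: indicator_def flip: ennreal_mult)
  also have "\<dots> = ennreal (exp y) * (\<integral>\<^sup>+k. ennreal (indicator {m..} k / k\<^sup>2) \<partial>lborel)"
    by (rule nn_integral_cmult) simp
  also have "\<dots> = ennreal (exp y / m)"
    using nn_integral_inverse_square_atLeast[OF m(1)] m by (simp flip: ennreal_mult)
  also have "\<dots> \<le> 1"
    using m by simp
  finally show ?thesis .
qed

text \<open>A Hardy-type inequality; Tonelli reduces it to the previous lemma.\<close>

lemma nn_integral_exp_weighted_mass_le:
  fixes h :: "real \<Rightarrow> real"
  assumes h: "integrable lborel h" "\<And>y. 0 \<le> h y" and K: "K > 0"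
  shows "(\<integral>\<^sup>+k. ennreal (indicator {K..} k * (LINT y|lborel. indicator {..ln k} y * (h y * exp y)) / k\<^sup>2) \<partial>lborel)
    \<le> ennreal (LINT y|lborel. h y)"
proof -
  have [measurable]: "h \<in> borel_measurable borel" using h by auto
  define \<psi> where "\<psi> k y = (if K \<le> k \<and> y \<le> ln k then exp y / k\<^sup>2 else 0)" for k y :: real
  have "indicator {K..} k * (LINT y|lborel. indicator {..ln k} y * (h y * exp y)) / k\<^sup>2 = (LINT y|lborel. h y * \<psi> k y)" for k
  proof (cases "K \<le> k")
    case True
    have "(LINT y|lborel. indicator {..ln k} y * (h y * exp y)) / k\<^sup>2 = (LINT y|lborel. indicator {..ln k} y * (h y * exp y) / k\<^sup>2)"
      by simp
    also have "\<dots> = (LINT y|lborel. h y * \<psi> k y)"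
      using True by (intro Bochner_Integration.integral_cong) (auto simp: \<psi>_def indicator_def)
    finally show ?thesis using True by simp
  qed (simp add: \<psi>_def)
  moreover have "integrable lborel (\<lambda>y. h y * \<psi> k y)" for k
  proof -
    have "(\<lambda>y. h y * \<psi> k y) = (\<lambda>y. indicator {K..} k / k\<^sup>2 * (indicator {..ln k} y * (h y * exp y)))"
      by (auto simp: \<psi>_def indicator_def fun_eq_iff)
    then show ?thesis using integrable_indicator_atMost_mult_exp[OF h(1)] by simp
  qed
  ultimately have "(\<integral>\<^sup>+k. ennreal (indicator {K..} k * (LINT y|lborel. indicator {..ln k} y * (h y * exp y)) / k\<^sup>2) \<partial>lborel)
      = (\<integral>\<^sup>+k. (\<integral>\<^sup>+y. ennreal (h y) * ennreal (\<psi> k y) \<partial>lborel) \<partial>lborel)"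
    using h(2) by (intro nn_integral_cong) (simp add: nn_integral_eq_integral \<psi>_def flip: ennreal_mult)
  also have "\<dots> = (\<integral>\<^sup>+y. ennreal (h y) * (\<integral>\<^sup>+k. ennreal (\<psi> k y) \<partial>lborel) \<partial>lborel)"
    unfolding \<psi>_def by (subst lborel_pair.Fubini') (measurable, simp add: nn_integral_cmult)
  also have "\<dots> \<le> (\<integral>\<^sup>+y. ennreal (h y) \<partial>lborel)"
    unfolding \<psi>_def using nn_integral_exp_over_square_le[OF K]
    by (intro nn_integral_mono) (metis mult.right_neutral mult_left_mono zero_le)
  also have "\<dots> = ennreal (LINT y|lborel. h y)"
    using h by (intro nn_integral_eq_integral) auto
  finally show ?thesis .
qed

lemma sum3_squared_le: "((x::real) + y + z)\<^sup>2 \<le> 3 * (x\<^sup>2 + y\<^sup>2 + z\<^sup>2)"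
proof -
  have "3 * (x\<^sup>2 + y\<^sup>2 + z\<^sup>2) - (x + y + z)\<^sup>2 = (x - y)\<^sup>2 + (y - z)\<^sup>2 + (x - z)\<^sup>2"
    by (simp add: power2_eq_square algebra_simps)
  moreover have "0 \<le> (x - y)\<^sup>2 + (y - z)\<^sup>2 + (x - z)\<^sup>2" by simp
  ultimately show ?thesis by linarith
qed

lemma nn_integral_less_top_if_le_integrable:
  fixes h :: "'a \<Rightarrow> real"
  assumes "integrable M h" "\<And>x. g x \<le> ennreal (h x)"
  shows "(\<integral>\<^sup>+x. g x \<partial>M) < \<infinity>"
proof -
  have "(\<integral>\<^sup>+x. g x \<partial>M) \<le> (\<integral>\<^sup>+x. ennreal (norm (h x)) \<partial>M)"
    using assms(2) by (intro nn_integral_mono) (metis order_trans ennreal_leI abs_ge_self real_norm_def)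
  also have "\<dots> < \<infinity>" using assms(1) by (simp add: integrable_iff_bounded)
  finally show ?thesis .
qed

lemma thermal_nn_integral_finite:
  fixes F :: "real \<Rightarrow> complex" and \<beta> \<gamma> M :: real
  assumes [measurable]: "F \<in> borel_measurable borel" and \<beta>: "\<beta> > 0" and \<gamma>: "\<gamma> > 1/2"
    and small: "\<And>p. 0 < p \<Longrightarrow> p \<le> 1 \<Longrightarrow> cmod (F p) \<le> M * p powr \<gamma>"
    and finite_norm: "(\<integral>\<^sup>+ p \<in> {0<..}. ennreal (cmod (F p) ^ 2 / (2 * p)) \<partial>lborel) < \<infinity>"
  shows "(\<integral>\<^sup>+ p \<in> {0<..}. ennreal (cmod (F p) ^ 2 / (2 * p) / (exp (\<beta> * p) - 1)) \<partial>lborel) < \<infinity>"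
proof -
  define A where "A = M\<^sup>2 / (2 * \<beta>)"
  define B where "B = 1 / (exp \<beta> - 1)"
  have B: "B > 0" using \<beta> by (simp add: B_def)
  have "ennreal (cmod (F p) ^ 2 / (2 * p) / (exp (\<beta> * p) - 1)) * indicator {0<..} p
      \<le> ennreal A * ennreal (indicator {0..1} p * p powr (2 * \<gamma> - 2))
        + ennreal B * (ennreal (cmod (F p) ^ 2 / (2 * p)) * indicator {0<..} p)" for p
  proof (cases "0 < p")
    case p: True
    have exp_ge: "\<beta> * p \<le> exp (\<beta> * p) - 1" using exp_ge_add_one_self[of "\<beta> * p"] by linarith
    show ?thesis
    proof (cases "p \<le> 1")
      case True
      have "cmod (F p) ^ 2 \<le> (M * p powr \<gamma>)\<^sup>2" using small[OF p True] by (intro power_mono) auto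
      also have "\<dots> = M\<^sup>2 * p powr (2 * \<gamma>)" using p by (simp add: power_mult_distrib powr_power)
      finally have "cmod (F p) ^ 2 / (2 * p) / (exp (\<beta> * p) - 1) \<le> M\<^sup>2 * p powr (2 * \<gamma>) / (2 * p) / (\<beta> * p)"
        using p \<beta> exp_ge by (intro divide_mono) auto
      also have "\<dots> = A * (p powr (2 * \<gamma>) / p powr 2)"
        using p \<beta> by (simp add: A_def powr_numeral field_simps power2_eq_square)
      also have "\<dots> = A * p powr (2 * \<gamma> - 2)" using p by (simp add: powr_diff)
      finally have "ennreal (cmod (F p) ^ 2 / (2 * p) / (exp (\<beta> * p) - 1))
          \<le> ennreal A * ennreal (indicator {0..1} p * p powr (2 * \<gamma> - 2))"
        using p True \<beta> by (simp add: A_def ennreal_leI flip: ennreal_mult)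
      then show ?thesis using p by (simp add: add_increasing2)
    next
      case False
      have "exp \<beta> - 1 \<le> exp (\<beta> * p) - 1" using False \<beta> by simp
      then have "cmod (F p) ^ 2 / (2 * p) / (exp (\<beta> * p) - 1) \<le> B * (cmod (F p) ^ 2 / (2 * p))"
        using p \<beta> by (simp add: B_def divide_left_mono)
      then have "ennreal (cmod (F p) ^ 2 / (2 * p) / (exp (\<beta> * p) - 1))
          \<le> ennreal B * ennreal (cmod (F p) ^ 2 / (2 * p))"
        using p B by (simp add: ennreal_leI flip: ennreal_mult)
      then show ?thesis using p by (simp add: add_increasing)
    qed
  qed simp
  then have "(\<integral>\<^sup>+ p \<in> {0<..}. ennreal (cmod (F p) ^ 2 / (2 * p) / (exp (\<beta> * p) - 1)) \<partial>lborel)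
      \<le> (\<integral>\<^sup>+p. ennreal A * ennreal (indicator {0..1} p * p powr (2 * \<gamma> - 2))
        + ennreal B * (ennreal (cmod (F p) ^ 2 / (2 * p)) * indicator {0<..} p) \<partial>lborel)"
    by (intro nn_integral_mono) blast
  also have "\<dots> = ennreal A * (\<integral>\<^sup>+p. ennreal (indicator {0..1} p * p powr (2 * \<gamma> - 2)) \<partial>lborel)
      + ennreal B * (\<integral>\<^sup>+ p \<in> {0<..}. ennreal (cmod (F p) ^ 2 / (2 * p)) \<partial>lborel)"
    by (simp add: nn_integral_add nn_integral_cmult)
  also have "\<dots> < \<infinity>"
    using nn_integral_powr_atLeastAtMost_0[of "2 * \<gamma> - 2" 1] \<gamma> finite_norm
    by (simp add: ennreal_mult_less_top)
  finally show ?thesis .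
qed

section \<open>The map xmap and integration by parts\<close>

lemma abs_xmap_le: "\<bar>xmap y\<bar> \<le> 1 + \<bar>y\<bar>"
proof -
  have "1 + exp (- y) \<le> exp 1 * exp \<bar>y\<bar>"
  proof -
    have "exp (- y) \<le> exp \<bar>y\<bar>" "1 \<le> exp \<bar>y\<bar>" by simp_all
    then have "1 + exp (- y) \<le> 2 * exp \<bar>y\<bar>" by linarith
    also have "\<dots> \<le> exp 1 * exp \<bar>y\<bar>" using exp_ge_add_one_self[of 1] by (intro mult_right_mono) auto
    finally show ?thesis .
  qed
  then have "ln (1 + exp (- y)) \<le> ln (exp (1 + \<bar>y\<bar>))"
    by (subst ln_le_cancel_iff) (auto simp: exp_add add_pos_pos)
  then show ?thesis by (simp add: xmap_def)
qed

lemma xmap_has_real_derivative: "(xmap has_real_derivative 1 / (1 + exp y)) (at y)"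
proof -
  have "(xmap has_real_derivative - (- exp (- y) / (1 + exp (- y)))) (at y)"
    unfolding xmap_def[abs_def] by (auto intro!: derivative_eq_intros simp: add_pos_pos)
  moreover have "- (- exp (- y) / (1 + exp (- y))) = 1 / (1 + exp y)"
    by (simp add: exp_minus field_simps add_pos_pos)
  ultimately show ?thesis by simp
qed

lemma borel_measurable_xmap [measurable]: "xmap \<in> borel_measurable borel"
  using xmap_has_real_derivative
  by (intro borel_measurable_continuous_onI continuous_at_imp_continuous_on) (blast intro: DERIV_isCont)

lemma has_vector_derivative_cis_xmap:
  "((\<lambda>y. cis (k * xmap y)) has_vector_derivative \<i> * of_real (k / (1 + exp y)) * cis (k * xmap y)) (at y)"
proof -
  have "((\<lambda>y. complex_of_real (k * xmap y)) has_vector_derivative of_real (k * (1 / (1 + exp y)))) (at y)"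
    by (intro has_vector_derivative_of_real DERIV_cmult xmap_has_real_derivative)
  moreover have "((\<lambda>z. exp (\<i> * z)) has_field_derivative \<i> * exp (\<i> * of_real (k * xmap y))) (at (of_real (k * xmap y)))"
    by (auto intro!: derivative_eq_intros)
  ultimately show ?thesis
    using field_vector_diff_chain_at by (fastforce simp: o_def cis_conv_exp mult_ac)
qed

lemma norm_one_plus_exp [simp]: "cmod (1 + complex_of_real (exp y)) = 1 + exp y"
  by (metis abs_of_pos add_pos_pos exp_gt_zero norm_of_real of_real_1 of_real_add zero_less_one)

text \<open>Since \<open>xmap' = 1 / (1 + exp)\<close>, the product \<open>f y * (1 + exp y)\<close> times the derivative of
  \<open>cis (k * xmap y)\<close> is \<open>\<i> * k * f y * cis (k * xmap y)\<close>.\<close>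

lemma integral_cis_xmap_by_parts:
  fixes f f' :: "real \<Rightarrow> complex"
  assumes "a \<le> u" and f': "\<And>y. (f has_vector_derivative f' y) (at y)"
  shows "(\<lambda>y. f y * cis (k * xmap y)) integrable_on {a..u}"
    and "((\<lambda>y. (f y * exp y + f' y * (1 + exp y)) * cis (k * xmap y)) has_integral
      f u * (1 + exp u) * cis (k * xmap u) - f a * (1 + exp a) * cis (k * xmap a)
      - \<i> * k * integral {a..u} (\<lambda>y. f y * cis (k * xmap y))) {a..u}"
proof -
  define E where "E y = cis (k * xmap y)" for y
  define g where "g y = f y * of_real (1 + exp y)" for y
  have g': "(g has_vector_derivative f y * exp y + f' y * (1 + exp y)) (at y)" for y
  proof -
    have "((\<lambda>y. complex_of_real (1 + exp y)) has_vector_derivative of_real (exp y)) (at y)"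
      by (auto intro!: derivative_eq_intros)
    from has_vector_derivative_mult[OF f' this] show ?thesis
      by (simp add: g_def[abs_def])
  qed
  have gE': "((\<lambda>y. g y * E y) has_vector_derivative
      \<i> * k * (f y * E y) + (f y * exp y + f' y * (1 + exp y)) * E y) (at y)" for y
  proof -
    have "1 + exp y \<noteq> 0" by (metis add_pos_pos exp_gt_zero less_numeral_extra(1) less_irrefl)
    then have "g y * (\<i> * of_real (k / (1 + exp y)) * E y) = \<i> * k * (f y * E y)"
      by (simp add: g_def field_simps flip: of_real_add)
    with has_vector_derivative_mult[OF g' has_vector_derivative_cis_xmap[of k y]] show ?thesis
      by (simp add: E_def)
  qed
  have ftc: "((\<lambda>y. \<i> * k * (f y * E y) + (f y * exp y + f' y * (1 + exp y)) * E y)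
      has_integral g u * E u - g a * E a) {a..u}"
    using gE' by (intro fundamental_theorem_of_calculus[OF \<open>a \<le> u\<close>]) (auto intro: has_vector_derivative_at_within)
  have fE: "(\<lambda>y. f y * E y) integrable_on {a..u}"
    unfolding E_def using f' xmap_has_real_derivative
    by (intro integrable_continuous_interval continuous_intros continuous_at_imp_continuous_on
        continuous_on_compose2[OF continuous_on_cis])
      (auto intro: DERIV_isCont has_vector_derivative_continuous)
  then show "(\<lambda>y. f y * cis (k * xmap y)) integrable_on {a..u}" by (simp add: E_def)
  have "((\<lambda>y. \<i> * k * (f y * E y)) has_integral \<i> * k * integral {a..u} (\<lambda>y. f y * E y)) {a..u}"
    using fE by (intro has_integral_mult_right integrable_integral)
  from has_integral_diff[OF ftc this]
  have "((\<lambda>y. (f y * exp y + f' y * (1 + exp y)) * E y) has_integral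
      g u * E u - g a * E a - \<i> * k * integral {a..u} (\<lambda>y. f y * E y)) {a..u}"
    by (simp only: add_diff_cancel_left')
  then show "((\<lambda>y. (f y * exp y + f' y * (1 + exp y)) * cis (k * xmap y)) has_integral
      f u * (1 + exp u) * cis (k * xmap u) - f a * (1 + exp a) * cis (k * xmap a)
      - \<i> * k * integral {a..u} (\<lambda>y. f y * cis (k * xmap y))) {a..u}"
    unfolding E_def g_def by simp
qed

lemma norm_integral_cis_xmap_le:
  fixes f f' :: "real \<Rightarrow> complex"
  assumes "a \<le> u" "k > 0" and f': "\<And>y. (f has_vector_derivative f' y) (at y)"
    and b: "(\<lambda>y. cmod (f' y) * (1 + exp y) + cmod (f y) * exp y) integrable_on {a..u}"
  shows "cmod (integral {a..u} (\<lambda>y. f y * cis (k * xmap y)))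
    \<le> (cmod (f u) * (1 + exp u) + cmod (f a) * (1 + exp a)
        + integral {a..u} (\<lambda>y. cmod (f' y) * (1 + exp y) + cmod (f y) * exp y)) / k"
proof -
  define I where "I = integral {a..u} (\<lambda>y. f y * cis (k * xmap y))"
  define R where "R = integral {a..u} (\<lambda>y. (f y * exp y + f' y * (1 + exp y)) * cis (k * xmap y))"
  note parts = integral_cis_xmap_by_parts[OF \<open>a \<le> u\<close> f', of k]
  define U where "U v = f v * (1 + exp v) * cis (k * xmap v)" for v
  have "\<i> * k * I = U u - U a - R"
    using parts(2) unfolding I_def R_def U_def by (simp add: integral_unique)
  moreover have "cmod (\<i> * k * I) = k * cmod I"
    using \<open>k > 0\<close> by (simp add: norm_mult)
  ultimately have "k * cmod I = cmod (U u - U a - R)" by simp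
  also have "\<dots> \<le> cmod (U u) + cmod (U a) + cmod R"
    using norm_triangle_ineq4[of "U u - U a" R] norm_triangle_ineq4[of "U u" "U a"] by linarith
  finally have "k * cmod I \<le> cmod (U u) + cmod (U a) + cmod R" .
  moreover have "cmod (U v) = cmod (f v) * (1 + exp v)" for v
    unfolding U_def by (simp add: norm_mult)
  moreover have "cmod R \<le> integral {a..u} (\<lambda>y. cmod (f' y) * (1 + exp y) + cmod (f y) * exp y)"
    unfolding R_def
  proof (rule integral_norm_bound_integral[OF _ b])
    show "(\<lambda>y. (f y * exp y + f' y * (1 + exp y)) * cis (k * xmap y)) integrable_on {a..u}"
      using parts(2) by blast
    fix y
    show "cmod ((f y * exp y + f' y * (1 + exp y)) * cis (k * xmap y)) \<le> cmod (f' y) * (1 + exp y) + cmod (f y) * exp y"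
      using norm_triangle_ineq[of "f y * exp y" "f' y * (1 + exp y)"]
      by (simp add: norm_mult flip: of_real_add)
  qed
  ultimately show ?thesis using \<open>k > 0\<close> unfolding I_def by (simp add: le_divide_eq mult.commute)
qed

section \<open>Functions with power decay at infinity\<close>

locale decaying_function =
  fixes f :: "real \<Rightarrow> complex" and C L \<alpha> \<epsilon> :: real
  assumes integrable_f: "integrable lborel f"
    and L_gt_1: "L > 1" and alpha_pos: "\<alpha> > 0" and eps_pos: "\<epsilon> > 0"
    and decay_left: "\<And>y. y \<le> - L \<Longrightarrow> cmod (f y) \<le> C / (- y) powr (1 + \<epsilon>)"
    and decay_right: "\<And>y. y \<ge> L \<Longrightarrow> cmod (f y) \<le> C / y powr (1 + \<alpha>)"
begin

lemma borel_measurable_f [measurable]: "f \<in> borel_measurable borel"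
  using integrable_f by auto

lemma C_nonneg: "C \<ge> 0"
proof -
  have "0 \<le> C / L powr (1 + \<alpha>)" using decay_right[of L] norm_ge_zero by (metis order_refl order_trans)
  then show ?thesis using L_gt_1 by (simp add: zero_le_divide_iff)
qed

definition moment :: "real \<Rightarrow> real" where
  "moment \<gamma> = (LINT y|lborel. cmod (f y) * (1 + \<bar>y\<bar>) powr \<gamma>)"

lemma integrable_moment:
  assumes "0 \<le> \<gamma>" "\<gamma> < \<alpha>" "\<gamma> < \<epsilon>"
  shows "integrable lborel (\<lambda>y. cmod (f y) * (1 + \<bar>y\<bar>) powr \<gamma>)"
  using integrable_weighted[where L = L, OF integrable_f _ decay_left decay_right] L_gt_1 assms by simp

lemma fourier_holder:
  assumes "0 \<le> \<gamma>" "\<gamma> \<le> 1" "\<gamma> < \<alpha>" "\<gamma> < \<epsilon>"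
  shows "cmod (fourier f p - fourier f q) \<le> 2 / sqrt (2 * pi) * moment \<gamma> * \<bar>p - q\<bar> powr \<gamma>"
proof -
  have "fourier f p - fourier f q
      = of_real (1 / sqrt (2 * pi)) * ((LINT y|lborel. f y * cis (p * - y)) - (LINT y|lborel. f y * cis (q * - y)))"
    by (simp add: fourier_def right_diff_distrib)
  then have "cmod (fourier f p - fourier f q)
      = 1 / sqrt (2 * pi) * cmod ((LINT y|lborel. f y * cis (p * - y)) - (LINT y|lborel. f y * cis (q * - y)))"
    by (simp add: norm_mult norm_divide)
  also have "\<dots> \<le> 1 / sqrt (2 * pi) * (2 * moment \<gamma> * \<bar>p - q\<bar> powr \<gamma>)"
    unfolding moment_def using assms
    by (intro mult_left_mono norm_integral_cis_diff_le integrable_f integrable_moment) auto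
  finally show ?thesis by simp
qed

lemma check_fourier_neg_holder:
  assumes "0 \<le> \<gamma>" "\<gamma> \<le> 1" "\<gamma> < \<alpha>" "\<gamma> < \<epsilon>"
  shows "cmod (check_fourier_neg f k - check_fourier_neg f k') \<le> 2 / sqrt (2 * pi) * moment \<gamma> * \<bar>k - k'\<bar> powr \<gamma>"
proof -
  have "check_fourier_neg f k - check_fourier_neg f k'
      = of_real (1 / sqrt (2 * pi)) * ((LINT y|lborel. f y * cis (k * xmap y)) - (LINT y|lborel. f y * cis (k' * xmap y)))"
    by (simp add: check_fourier_neg_def right_diff_distrib)
  then have "cmod (check_fourier_neg f k - check_fourier_neg f k')
      = 1 / sqrt (2 * pi) * cmod ((LINT y|lborel. f y * cis (k * xmap y)) - (LINT y|lborel. f y * cis (k' * xmap y)))"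
    by (simp add: norm_mult norm_divide)
  also have "\<dots> \<le> 1 / sqrt (2 * pi) * (2 * moment \<gamma> * \<bar>k - k'\<bar> powr \<gamma>)"
    unfolding moment_def using assms abs_xmap_le
    by (intro mult_left_mono norm_integral_cis_diff_le integrable_f integrable_moment) auto
  finally show ?thesis by simp
qed

definition holder_exponent :: real where
  "holder_exponent = min 1 (min \<alpha> \<epsilon>) / 2"

lemma holder_exponent: "0 < holder_exponent" "holder_exponent \<le> 1" "holder_exponent < \<alpha>" "holder_exponent < \<epsilon>"
  using alpha_pos eps_pos by (auto simp: holder_exponent_def)

lemma continuous_on_fourier: "continuous_on UNIV (fourier f)"
  using holder_exponent by (intro continuous_on_if_holder[OF fourier_holder]) auto

lemma borel_measurable_fourier [measurable]: "fourier f \<in> borel_measurable borel"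
  by (intro borel_measurable_continuous_onI continuous_on_fourier)

lemma fourier_zero_if_positive_frequencies:
  assumes pos_freq: "\<And>p. p < 0 \<Longrightarrow> fourier f p = 0"
  shows "fourier f 0 = 0"
proof -
  have "(fourier f \<longlongrightarrow> fourier f 0) (at_left 0)"
    using continuous_on_fourier by (intro filterlim_at_split[THEN iffD1, THEN conjunct1]) (simp add: continuous_on_def)
  moreover have "(fourier f \<longlongrightarrow> 0) (at_left 0)"
    by (rule tendsto_eventually) (use pos_freq eventually_at_left_real[of "-1" 0] in \<open>auto elim: eventually_mono\<close>)
  ultimately show ?thesis
    by (rule tendsto_unique[OF trivial_limit_at_left_real])
qed

lemma check_fourier_neg_zero: "check_fourier_neg f 0 = fourier f 0"
  by (simp add: check_fourier_neg_def fourier_def)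

lemma norm_fourier_le:
  assumes "\<And>p. p < 0 \<Longrightarrow> fourier f p = 0"
    and "0 \<le> \<gamma>" "\<gamma> \<le> 1" "\<gamma> < \<alpha>" "\<gamma> < \<epsilon>"
  shows "cmod (fourier f p) \<le> 2 / sqrt (2 * pi) * moment \<gamma> * \<bar>p\<bar> powr \<gamma>"
  using fourier_holder[OF assms(2-), of p 0] fourier_zero_if_positive_frequencies[OF assms(1)] by simp

lemma norm_check_fourier_neg_le:
  assumes "\<And>p. p < 0 \<Longrightarrow> fourier f p = 0"
    and "0 \<le> \<gamma>" "\<gamma> \<le> 1" "\<gamma> < \<alpha>" "\<gamma> < \<epsilon>"
  shows "cmod (check_fourier_neg f k) \<le> 2 / sqrt (2 * pi) * moment \<gamma> * \<bar>k\<bar> powr \<gamma>"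
  using check_fourier_neg_holder[OF assms(2-), of k 0] fourier_zero_if_positive_frequencies[OF assms(1)]
  by (simp add: check_fourier_neg_zero)

lemma integrable_f_cis:
  assumes [measurable]: "\<theta> \<in> borel_measurable borel"
  shows "integrable lborel (\<lambda>y. f y * cis (\<theta> y))"
  by (rule Bochner_Integration.integrable_bound[OF integrable_f]) (auto simp: norm_mult)

lemma norm_integral_left_tail_le:
  assumes [measurable]: "\<theta> \<in> borel_measurable borel"
    and "k > 0" "0 \<le> \<gamma>" "\<gamma> < \<alpha>" "\<gamma> < \<epsilon>"
  shows "cmod (LINT y|lborel. indicator {..<-k} y *\<^sub>R (f y * cis (\<theta> y))) \<le> moment \<gamma> * k powr (- \<gamma>)"
proof -
  have "k powr \<gamma> \<le> (1 + \<bar>y\<bar>) powr \<gamma>" if "y \<in> {..<-k}" for y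
    using that assms by (intro powr_mono2) auto
  then have "cmod (LINT y|lborel. indicator {..<-k} y *\<^sub>R (f y * cis (\<theta> y)))
      \<le> (LINT y|lborel. cmod (f y * cis (\<theta> y)) * (1 + \<bar>y\<bar>) powr \<gamma>) / k powr \<gamma>"
    using assms integrable_moment
    by (intro norm_set_integral_le_weighted integrable_f_cis) (auto simp: norm_mult)
  then show ?thesis by (simp add: moment_def norm_mult powr_minus divide_inverse)
qed

definition right_moment :: "real \<Rightarrow> real" where
  "right_moment \<gamma> = (LINT y|lborel. indicator {0..} y * (cmod (f y) * (1 + y) powr \<gamma>))"

lemma integrable_right_moment:
  assumes "0 \<le> \<gamma>" "\<gamma> < \<alpha>"
  shows "integrable lborel (\<lambda>y. indicator {0..} y * (cmod (f y) * (1 + y) powr \<gamma>))"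
  using integrable_weighted_right_tail[where L = L, OF integrable_f _ decay_right] L_gt_1 assms by simp

lemma norm_integral_right_tail_le:
  assumes [measurable]: "\<theta> \<in> borel_measurable borel"
    and "u > 0" "0 \<le> \<gamma>" "\<gamma> < \<alpha>"
  shows "cmod (LINT y|lborel. indicator {u<..} y *\<^sub>R (f y * cis (\<theta> y))) \<le> right_moment \<gamma> * u powr (- \<gamma>)"
proof -
  have "integrable lborel (\<lambda>y. indicator {0..} y * (cmod (f y) * (1 + y) powr \<gamma>))"
    using integrable_right_moment assms by simp
  moreover have "u powr \<gamma> \<le> indicator {0..} y * (1 + y) powr \<gamma>" if "y \<in> {u<..}" for y
    using that assms by (auto intro: powr_mono2)
  ultimately have "cmod (LINT y|lborel. indicator {u<..} y *\<^sub>R (f y * cis (\<theta> y)))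
      \<le> (LINT y|lborel. cmod (f y * cis (\<theta> y)) * (indicator {0..} y * (1 + y) powr \<gamma>)) / u powr \<gamma>"
    using assms by (intro norm_set_integral_le_weighted integrable_f_cis) (auto simp: norm_mult mult_ac)
  then show ?thesis by (simp add: right_moment_def norm_mult powr_minus divide_inverse mult_ac)
qed

lemma check_integrand_small_le:
  assumes pos_freq: "\<And>p. p < 0 \<Longrightarrow> fourier f p = 0" and k: "k > 0"
  shows "cmod (check_fourier_neg f k) ^ 2 / (2 * k)
    \<le> (2 / sqrt (2 * pi) * moment holder_exponent) ^ 2 / 2 * k powr (2 * holder_exponent - 1)"
proof -
  define M where "M = 2 / sqrt (2 * pi) * moment holder_exponent"
  have "cmod (check_fourier_neg f k) \<le> M * k powr holder_exponent"
    using norm_check_fourier_neg_le[OF pos_freq, of holder_exponent k] holder_exponent k by (simp add: M_def)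
  then have "cmod (check_fourier_neg f k) ^ 2 \<le> (M * k powr holder_exponent) ^ 2"
    by (intro power_mono) auto
  also have "\<dots> = M ^ 2 * k powr (2 * holder_exponent)"
    using k by (simp add: power_mult_distrib powr_power)
  finally have "cmod (check_fourier_neg f k) ^ 2 / (2 * k) \<le> M ^ 2 / 2 * (k powr (2 * holder_exponent) / k)"
    using k by (simp add: divide_right_mono)
  also have "k powr (2 * holder_exponent) / k = k powr (2 * holder_exponent - 1)"
    using k by (simp add: powr_diff)
  finally show ?thesis by (simp add: M_def)
qed

lemma Nbar_th_finite:
  assumes pos_freq: "\<And>p. p < 0 \<Longrightarrow> fourier f p = 0"
    and finite_norm: "(\<integral>\<^sup>+ p \<in> {0<..}. ennreal (cmod (fourier f p) ^ 2 / (2 * p)) \<partial>lborel) < \<infinity>"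
    and "\<alpha> > 1/2" "\<epsilon> > 1/2" "\<beta> > 0"
  shows "Nbar_th \<beta> f < \<infinity>"
proof -
  define \<gamma> where "\<gamma> = (1/2 + min 1 (min \<alpha> \<epsilon>)) / 2"
  have \<gamma>: "0 \<le> \<gamma>" "\<gamma> \<le> 1" "\<gamma> < \<alpha>" "\<gamma> < \<epsilon>" "\<gamma> > 1/2"
    using assms by (auto simp: \<gamma>_def)
  have "cmod (fourier f p) \<le> 2 / sqrt (2 * pi) * moment \<gamma> * p powr \<gamma>" if "0 < p" for p
    using norm_fourier_le[OF pos_freq \<gamma>(1-4), of p] that by simp
  then show ?thesis
    unfolding Nbar_th_def using finite_norm \<gamma>(5) \<open>\<beta> > 0\<close>
    by (intro thermal_nn_integral_finite[OF borel_measurable_fourier, where M = "2 / sqrt (2 * pi) * moment \<gamma>"]) auto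
qed

end

locale smooth_decaying_function = decaying_function +
  assumes differentiable: "\<And>y. f differentiable (at y)"
    and integrable_df: "integrable lborel (\<lambda>y. vector_derivative f (at y))"
begin

abbreviation df :: "real \<Rightarrow> complex" where
  "df y \<equiv> vector_derivative f (at y)"

lemma has_vector_derivative_f: "(f has_vector_derivative df y) (at y)"
  using differentiable vector_derivative_works by blast

lemma borel_measurable_df [measurable]: "df \<in> borel_measurable borel"
  using integrable_df by auto

lemma integrable_norm_df_f: "integrable lborel (\<lambda>y. cmod (df y) + cmod (f y))"
  using integrable_df integrable_f by auto

definition exp_mass :: "real \<Rightarrow> real" where
  "exp_mass k = (LINT y|lborel. indicator {..ln k} y * ((cmod (df y) + cmod (f y)) * exp y))"

lemma exp_mass_nonneg: "0 \<le> exp_mass k"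
  unfolding exp_mass_def by (intro integral_nonneg_AE) auto

lemma exp_mass_le:
  assumes "k > 0"
  shows "exp_mass k \<le> k * (LINT y|lborel. cmod (df y) + cmod (f y))"
proof -
  have "exp_mass k \<le> (LINT y|lborel. k * (cmod (df y) + cmod (f y)))"
    unfolding exp_mass_def
  proof (rule integral_mono)
    fix y
    show "indicator {..ln k} y * ((cmod (df y) + cmod (f y)) * exp y) \<le> k * (cmod (df y) + cmod (f y))"
    proof (cases "y \<le> ln k")
      case True
      then have "exp y \<le> k" using assms by (metis exp_le_cancel_iff exp_ln)
      then show ?thesis
        using True mult_right_mono[of "exp y" k "cmod (df y) + cmod (f y)"] by (simp add: mult.commute)
    qed (use assms in simp)
  qed (use integrable_indicator_atMost_mult_exp[OF integrable_norm_df_f] integrable_norm_df_f in auto)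
  then show ?thesis by simp
qed

lemma exp_mass_squared_le:
  assumes "k > 0"
  shows "(exp_mass k / k)\<^sup>2 / k \<le> (LINT y|lborel. cmod (df y) + cmod (f y)) * (exp_mass k / k\<^sup>2)"
proof -
  have "exp_mass k / k \<le> (LINT y|lborel. cmod (df y) + cmod (f y))"
    using exp_mass_le[OF assms] assms by (simp add: divide_le_eq mult.commute)
  then have "(exp_mass k / k) * (exp_mass k / k) / k \<le> (LINT y|lborel. cmod (df y) + cmod (f y)) * (exp_mass k / k) / k"
    using exp_mass_nonneg[of k] assms by (intro divide_right_mono mult_right_mono) auto
  then show ?thesis by (simp add: power2_eq_square)
qed

lemma borel_measurable_exp_mass [measurable]: "exp_mass \<in> borel_measurable borel"
proof -
  have "exp_mass = (\<lambda>k. LINT y|lborel. (if y \<le> ln k then (cmod (df y) + cmod (f y)) * exp y else 0))"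
    unfolding exp_mass_def by (intro ext Bochner_Integration.integral_cong) (auto simp: indicator_def)
  also have "\<dots> \<in> borel_measurable borel" by measurable
  finally show ?thesis .
qed

lemma integrable_exp_mass_over_square:
  assumes "K > 0"
  shows "integrable lborel (\<lambda>k. indicator {K..} k * (exp_mass k / k\<^sup>2))"
proof (rule integrableI_nonneg)
  have "(\<integral>\<^sup>+k. ennreal (indicator {K..} k * (exp_mass k / k\<^sup>2)) \<partial>lborel) \<le> ennreal (LINT y|lborel. cmod (df y) + cmod (f y))"
    using nn_integral_exp_weighted_mass_le[OF integrable_norm_df_f _ assms] unfolding exp_mass_def by simp
  then show "(\<integral>\<^sup>+k. ennreal (indicator {K..} k * (exp_mass k / k\<^sup>2)) \<partial>lborel) < \<infinity>"
    using order.strict_trans1 by fastforce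
qed (auto simp: exp_mass_nonneg)

lemma large_frequency:
  assumes "k \<ge> exp L"
  shows "L \<le> ln k" "1 < ln k" "1 < k" "L \<le> k" "- k \<le> ln k"
proof -
  have "L < exp L" using exp_ge_add_one_self[of L] by linarith
  moreover have "1 < exp L" using L_gt_1 by simp
  ultimately have "1 < k" "L \<le> k" using assms by linarith+
  moreover from this have "L \<le> ln k" using assms by (simp add: ln_ge_iff)
  ultimately show "L \<le> ln k" "1 < ln k" "1 < k" "L \<le> k" "- k \<le> ln k"
    using L_gt_1 by linarith+
qed

lemma set_integrable_by_parts_majorant:
  "set_integrable lborel {a..u} (\<lambda>y. cmod (df y) * (1 + exp y) + cmod (f y) * exp y)"
  unfolding set_integrable_def
proof (rule Bochner_Integration.integrable_bound)
  show "integrable lborel (\<lambda>y. (1 + exp u) * (cmod (df y) + cmod (f y)))"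
    using integrable_norm_df_f by auto
  have "indicator {a..u} y * (cmod (df y) * (1 + exp y) + cmod (f y) * exp y) \<le> (1 + exp u) * (cmod (df y) + cmod (f y))" for y
  proof (cases "y \<in> {a..u}")
    case True
    then have "exp y \<le> exp u" by simp
    then have "1 + exp y \<le> 1 + exp u" "exp y \<le> 1 + exp u" by (linarith, smt (verit) exp_gt_zero)
    then have "cmod (df y) * (1 + exp y) \<le> cmod (df y) * (1 + exp u)" "cmod (f y) * exp y \<le> cmod (f y) * (1 + exp u)"
      by (simp_all add: mult_left_mono)
    then show ?thesis using True by (simp add: algebra_simps)
  qed simp
  then show "AE y in lborel. norm (indicator {a..u} y *\<^sub>R (cmod (df y) * (1 + exp y) + cmod (f y) * exp y))
      \<le> norm ((1 + exp u) * (cmod (df y) + cmod (f y)))"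
    by (intro AE_I2) (simp add: abs_mult add_nonneg_nonneg)
qed simp

lemma set_integral_by_parts_majorant_le:
  "(LINT y:{a..ln k}|lborel. cmod (df y) * (1 + exp y) + cmod (f y) * exp y)
    \<le> (LINT y|lborel. cmod (df y)) + exp_mass k"
proof -
  have "(LINT y:{a..ln k}|lborel. cmod (df y) * (1 + exp y) + cmod (f y) * exp y)
      \<le> (LINT y|lborel. cmod (df y) + indicator {..ln k} y * ((cmod (df y) + cmod (f y)) * exp y))"
    unfolding set_lebesgue_integral_def
  proof (rule integral_mono)
    show "integrable lborel (\<lambda>y. indicator {a..ln k} y *\<^sub>R (cmod (df y) * (1 + exp y) + cmod (f y) * exp y))"
      using set_integrable_by_parts_majorant unfolding set_integrable_def .
    show "integrable lborel (\<lambda>y. cmod (df y) + indicator {..ln k} y * ((cmod (df y) + cmod (f y)) * exp y))"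
      using integrable_df integrable_indicator_atMost_mult_exp[OF integrable_norm_df_f] by auto
  qed (auto simp: indicator_def algebra_simps)
  also have "\<dots> = (LINT y|lborel. cmod (df y)) + exp_mass k"
    unfolding exp_mass_def
    using integrable_df integrable_indicator_atMost_mult_exp[OF integrable_norm_df_f] by simp
  finally show ?thesis .
qed

lemma norm_integral_middle_le:
  assumes k: "k \<ge> exp L"
  shows "cmod (LINT y|lborel. indicator {-k..ln k} y *\<^sub>R (f y * cis (k * xmap y)))
    \<le> 2 * C / ln k powr (1 + \<alpha>) + (2 * C + (LINT y|lborel. cmod (df y)) + exp_mass k) / k"
proof -
  note L = large_frequency[OF k]
  define b where "b y = cmod (df y) * (1 + exp y) + cmod (f y) * exp y" for y
  have b: "set_integrable lborel {-k..ln k} b"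
    unfolding b_def by (rule set_integrable_by_parts_majorant)
  have "(LINT y|lborel. indicator {-k..ln k} y *\<^sub>R (f y * cis (k * xmap y))) = integral {-k..ln k} (\<lambda>y. f y * cis (k * xmap y))"
    using set_borel_integral_eq_integral(2)[of "{-k..ln k}" "\<lambda>y. f y * cis (k * xmap y)"] integrable_f_cis
    unfolding set_integrable_def set_lebesgue_integral_def by (simp add: integrable_mult_indicator)
  also have "cmod \<dots> \<le> (cmod (f (ln k)) * (1 + exp (ln k)) + cmod (f (- k)) * (1 + exp (- k)) + integral {-k..ln k} b) / k"
    unfolding b_def
    using L b set_borel_integral_eq_integral(1) unfolding b_def
    by (intro norm_integral_cis_xmap_le has_vector_derivative_f) auto
  also have "\<dots> \<le> (2 * C * k / ln k powr (1 + \<alpha>) + 2 * C + ((LINT y|lborel. cmod (df y)) + exp_mass k)) / k"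
  proof (intro divide_right_mono add_mono)
    have "1 + exp (ln k) \<le> 2 * k" using L by simp
    from mult_mono[OF decay_right[OF L(1)] this]
    show "cmod (f (ln k)) * (1 + exp (ln k)) \<le> 2 * C * k / ln k powr (1 + \<alpha>)"
      using C_nonneg by (simp add: mult_ac)
    have "1 \<le> k powr (1 + \<epsilon>)" using L eps_pos by (intro ge_one_powr_ge_zero) auto
    from divide_left_mono[OF this C_nonneg] have "C / k powr (1 + \<epsilon>) \<le> C" using L by simp
    then have "cmod (f (- k)) \<le> C"
      using decay_left[of "- k"] L by simp
    then show "cmod (f (- k)) * (1 + exp (- k)) \<le> 2 * C"
      using L C_nonneg mult_mono[of "cmod (f (- k))" C "1 + exp (- k)" 2] by (simp add: mult.commute)
    show "integral {-k..ln k} b \<le> (LINT y|lborel. cmod (df y)) + exp_mass k"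
      using set_integral_by_parts_majorant_le[of "- k" k] set_borel_integral_eq_integral(2)[OF b]
      unfolding b_def by simp
  qed (use L in auto)
  also have "\<dots> = 2 * C / ln k powr (1 + \<alpha>) + (2 * C + (LINT y|lborel. cmod (df y)) + exp_mass k) / k"
    using L by (simp add: field_simps)
  finally show ?thesis .
qed

lemma norm_integral_cis_xmap_large_le:
  assumes \<gamma>: "0 \<le> \<gamma>" "\<gamma> < \<alpha>"
  obtains P Q where "\<And>k. k \<ge> exp L \<Longrightarrow> cmod (LINT y|lborel. f y * cis (k * xmap y))
    \<le> P * ln k powr (- \<gamma>) + Q * k powr (- holder_exponent) + exp_mass k / k"
proof (rule that)
  fix k :: real
  assume k: "k \<ge> exp L"
  note K = large_frequency[OF k]
  define \<gamma>\<^sub>0 where "\<gamma>\<^sub>0 = holder_exponent"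
  define ND where "ND = (LINT y|lborel. cmod (df y))"
  have "ND \<ge> 0" unfolding ND_def by (intro integral_nonneg_AE) auto
  define S where "S A = (LINT y|lborel. indicator A y *\<^sub>R (f y * cis (k * xmap y)))" for A
  have split: "f y * cis (k * xmap y) = indicator {..<-k} y *\<^sub>R (f y * cis (k * xmap y))
      + indicator {-k..ln k} y *\<^sub>R (f y * cis (k * xmap y)) + indicator {ln k<..} y *\<^sub>R (f y * cis (k * xmap y))" for y
    using K by (auto simp: indicator_def)
  have "integrable lborel (\<lambda>y. indicator A y *\<^sub>R (f y * cis (k * xmap y)))" if "A \<in> sets borel" for A
    using that by (intro integrable_mult_indicator integrable_f_cis) auto
  then have "(LINT y|lborel. f y * cis (k * xmap y)) = S {..<-k} + S {-k..ln k} + S {ln k<..}"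
    unfolding S_def by (subst split) simp
  then have "cmod (LINT y|lborel. f y * cis (k * xmap y)) \<le> cmod (S {..<-k}) + cmod (S {-k..ln k}) + cmod (S {ln k<..})"
    by (metis norm_triangle_ineq order_trans add_right_mono)
  also have "\<dots> \<le> moment \<gamma>\<^sub>0 * k powr (- \<gamma>\<^sub>0)
      + (2 * C / ln k powr (1 + \<alpha>) + (2 * C + ND + exp_mass k) / k) + right_moment \<gamma> * ln k powr (- \<gamma>)"
    unfolding S_def ND_def \<gamma>\<^sub>0_def using K \<gamma> holder_exponent
    by (intro add_mono norm_integral_left_tail_le norm_integral_middle_le[OF k] norm_integral_right_tail_le) auto
  also have "\<dots> \<le> (right_moment \<gamma> + 2 * C) * ln k powr (- \<gamma>)
      + (moment \<gamma>\<^sub>0 + 2 * C + ND) * k powr (- \<gamma>\<^sub>0) + exp_mass k / k"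
  proof -
    have "ln k powr (- (1 + \<alpha>)) \<le> ln k powr (- \<gamma>)" "k powr (- 1) \<le> k powr (- \<gamma>\<^sub>0)"
      using K \<gamma> holder_exponent unfolding \<gamma>\<^sub>0_def by (intro powr_mono; simp)+
    then have "1 / ln k powr (1 + \<alpha>) \<le> ln k powr (- \<gamma>)" "1 / k \<le> k powr (- \<gamma>\<^sub>0)"
      by (simp_all only: powr_minus_divide powr_one_gt_zero_iff) (use K in simp)
    then have "2 * C * (1 / ln k powr (1 + \<alpha>)) + (2 * C + ND) * (1 / k)
        \<le> 2 * C * ln k powr (- \<gamma>) + (2 * C + ND) * k powr (- \<gamma>\<^sub>0)"
      using C_nonneg \<open>ND \<ge> 0\<close> by (intro add_mono mult_left_mono) auto
    then show ?thesis by (simp add: algebra_simps add_divide_distrib)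
  qed
  finally show "cmod (LINT y|lborel. f y * cis (k * xmap y))
      \<le> (right_moment \<gamma> + 2 * C) * ln k powr (- \<gamma>)
        + (moment holder_exponent + 2 * C + (LINT y|lborel. cmod (df y))) * k powr (- holder_exponent) + exp_mass k / k"
    unfolding \<gamma>\<^sub>0_def ND_def .
qed

lemma check_integrand_large_le:
  assumes \<gamma>: "0 \<le> \<gamma>" "\<gamma> < \<alpha>"
  obtains A\<^sub>1 A\<^sub>2 A\<^sub>3 where "\<And>k. k \<ge> exp L \<Longrightarrow> cmod (check_fourier_neg f k) ^ 2 / (2 * k)
    \<le> A\<^sub>1 * (ln k powr (- 2 * \<gamma>) / k) + A\<^sub>2 * k powr (- 2 * holder_exponent - 1) + A\<^sub>3 * (exp_mass k / k\<^sup>2)"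
proof -
  obtain P Q where PQ: "\<And>k. k \<ge> exp L \<Longrightarrow> cmod (LINT y|lborel. f y * cis (k * xmap y))
      \<le> P * ln k powr (- \<gamma>) + Q * k powr (- holder_exponent) + exp_mass k / k"
    using norm_integral_cis_xmap_large_le[OF \<gamma>] by blast
  define c where "c = 1 / sqrt (2 * pi)"
  define MH where "MH = (LINT y|lborel. cmod (df y) + cmod (f y))"
  show ?thesis
  proof (rule that[of "3 / 2 * c\<^sup>2 * P\<^sup>2" "3 / 2 * c\<^sup>2 * Q\<^sup>2" "3 / 2 * c\<^sup>2 * MH"])
    fix k :: real
    assume k: "k \<ge> exp L"
    note K = large_frequency[OF k]
    define x where "x = c * P * ln k powr (- \<gamma>)"
    define y where "y = c * Q * k powr (- holder_exponent)"
    define z where "z = c * (exp_mass k / k)"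
    have "cmod (check_fourier_neg f k) = c * cmod (LINT y|lborel. f y * cis (k * xmap y))"
      by (simp add: check_fourier_neg_def c_def norm_mult norm_divide)
    also have "\<dots> \<le> x + y + z"
      using mult_left_mono[OF PQ[OF k], of c] by (simp add: c_def x_def y_def z_def algebra_simps)
    finally have "cmod (check_fourier_neg f k) ^ 2 \<le> (x + y + z)\<^sup>2"
      by (intro power_mono) auto
    also have "\<dots> \<le> 3 * (x\<^sup>2 + y\<^sup>2 + z\<^sup>2)" by (rule sum3_squared_le)
    finally have "cmod (check_fourier_neg f k) ^ 2 / (2 * k) \<le> 3 * (x\<^sup>2 + y\<^sup>2 + z\<^sup>2) / (2 * k)"
      using K by (simp add: divide_right_mono)
    also have "\<dots> = 3 / 2 * (x\<^sup>2 / k) + 3 / 2 * (y\<^sup>2 / k) + 3 / 2 * (z\<^sup>2 / k)"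
      by (simp add: add_divide_distrib)
    also have "x\<^sup>2 / k = c\<^sup>2 * P\<^sup>2 * (ln k powr (- 2 * \<gamma>) / k)"
      using K by (simp add: x_def power_mult_distrib powr_power)
    also have "y\<^sup>2 / k = c\<^sup>2 * Q\<^sup>2 * k powr (- 2 * holder_exponent - 1)"
      using K by (simp add: y_def power_mult_distrib powr_power powr_diff)
    also have "z\<^sup>2 / k \<le> c\<^sup>2 * MH * (exp_mass k / k\<^sup>2)"
    proof -
      have "z\<^sup>2 / k = c\<^sup>2 * ((exp_mass k / k)\<^sup>2 / k)"
        by (simp add: z_def power_mult_distrib power_divide)
      also have "\<dots> \<le> c\<^sup>2 * (MH * (exp_mass k / k\<^sup>2))"
        using exp_mass_squared_le[of k] K unfolding MH_def by (intro mult_left_mono) auto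
      finally show ?thesis by (simp only: mult.assoc)
    qed
    finally show "cmod (check_fourier_neg f k) ^ 2 / (2 * k)
        \<le> 3 / 2 * c\<^sup>2 * P\<^sup>2 * (ln k powr (- 2 * \<gamma>) / k) + 3 / 2 * c\<^sup>2 * Q\<^sup>2 * k powr (- 2 * holder_exponent - 1)
          + 3 / 2 * c\<^sup>2 * MH * (exp_mass k / k\<^sup>2)"
      by (simp add: mult_ac)
  qed
qed

lemma Nbar_finite:
  assumes pos_freq: "\<And>p. p < 0 \<Longrightarrow> fourier f p = 0" and "\<alpha> > 1/2"
  shows "Nbar f < \<infinity>"
proof -
  define \<gamma> where "\<gamma> = (1/2 + \<alpha>) / 2"
  define \<gamma>\<^sub>0 where "\<gamma>\<^sub>0 = holder_exponent"
  define K where "K = exp L"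
  have \<gamma>: "0 \<le> \<gamma>" "\<gamma> < \<alpha>" "2 * \<gamma> > 1" using \<open>\<alpha> > 1/2\<close> by (auto simp: \<gamma>_def)
  have K: "K > 1" using L_gt_1 by (simp add: K_def)
  obtain A\<^sub>1 A\<^sub>2 A\<^sub>3 where large: "\<And>k. k \<ge> K \<Longrightarrow> cmod (check_fourier_neg f k) ^ 2 / (2 * k)
      \<le> A\<^sub>1 * (ln k powr (- 2 * \<gamma>) / k) + A\<^sub>2 * k powr (- 2 * \<gamma>\<^sub>0 - 1) + A\<^sub>3 * (exp_mass k / k\<^sup>2)"
    using check_integrand_large_le[OF \<gamma>(1,2)] unfolding K_def \<gamma>\<^sub>0_def by blast
  define A\<^sub>0 where "A\<^sub>0 = (2 / sqrt (2 * pi) * moment \<gamma>\<^sub>0) ^ 2 / 2"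
  define h where "h k = A\<^sub>0 * (indicator {0..K} k * k powr (2 * \<gamma>\<^sub>0 - 1))
    + A\<^sub>1 * (indicator {K..} k * (ln k powr (- (2 * \<gamma>)) / k))
    + A\<^sub>2 * (indicator {K..} k * k powr (- 2 * \<gamma>\<^sub>0 - 1))
    + A\<^sub>3 * (indicator {K..} k * (exp_mass k / k\<^sup>2))" for k
  have i\<^sub>0: "integrable lborel (\<lambda>k. indicator {0..K} k * k powr (2 * \<gamma>\<^sub>0 - 1))"
    using nn_integral_powr_atLeastAtMost_0[of "2 * \<gamma>\<^sub>0 - 1" K] K holder_exponent
    by (intro integrableI_nonneg) (auto simp: \<gamma>\<^sub>0_def)
  have i\<^sub>1: "integrable lborel (\<lambda>k. indicator {K..} k * (ln k powr (- (2 * \<gamma>)) / k))"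
    using K \<gamma> by (intro integrable_ln_powr_atLeast) auto
  have i\<^sub>2: "integrable lborel (\<lambda>k. indicator {K..} k * k powr (- 2 * \<gamma>\<^sub>0 - 1))"
    using K holder_exponent by (intro integrable_powr_atLeast) (auto simp: \<gamma>\<^sub>0_def)
  have i\<^sub>3: "integrable lborel (\<lambda>k. indicator {K..} k * (exp_mass k / k\<^sup>2))"
    using K by (intro integrable_exp_mass_over_square) simp
  have "integrable lborel h"
    unfolding h_def by (intro Bochner_Integration.integrable_add integrable_mult_right i\<^sub>0 i\<^sub>1 i\<^sub>2 i\<^sub>3)
  moreover have "ennreal (cmod (check_fourier_neg f k) ^ 2 / (2 * k)) * indicator {0<..} k \<le> ennreal (h k)" for k
  proof (cases "0 < k")
    case True
    have "cmod (check_fourier_neg f k) ^ 2 / (2 * k) \<le> h k"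
    proof (cases "k < K")
      case True
      then show ?thesis
        using check_integrand_small_le[OF pos_freq \<open>0 < k\<close>] \<open>0 < k\<close>
        by (simp add: h_def A\<^sub>0_def \<gamma>\<^sub>0_def indicator_def)
    next
      case False
      have "0 \<le> A\<^sub>0 * (indicator {0..K} k * k powr (2 * \<gamma>\<^sub>0 - 1))" by (simp add: A\<^sub>0_def)
      then show ?thesis using large[of k] False by (simp add: h_def)
    qed
    then show ?thesis using True by (simp add: ennreal_leI)
  qed simp
  ultimately show ?thesis
    unfolding Nbar_def by (rule nn_integral_less_top_if_le_integrable)
qed

end

theorem theorem2:
  fixes f :: "real \<Rightarrow> complex" and C L \<alpha> \<epsilon> :: real
  assumes pos_freq: "\<And>p. p < 0 \<Longrightarrow> fourier f p = 0"
    and normalised: "(\<integral>\<^sup>+ p \<in> {0<..}. ennreal (cmod (fourier f p) ^ 2 / (2 * p)) \<partial>lborel) = 1"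
    and diff: "\<And>y. f differentiable (at y)"
    and int_f: "integrable lborel f"
    and int_df: "integrable lborel (\<lambda>y. vector_derivative f (at y))"
    and C_pos: "C > 0" and L_gt: "L > 1" and alpha_gt: "\<alpha> > 1/2" and eps_pos: "\<epsilon> > 0"
    and decay_left: "\<And>y. y \<le> - L \<Longrightarrow> cmod (f y) \<le> C / (- y) powr (1 + \<epsilon>)"
    and decay_right: "\<And>y. y \<ge> L \<Longrightarrow> cmod (f y) \<le> C / y powr (1 + \<alpha>)"
  shows "Nbar f < \<infinity> \<and> (\<epsilon> > 1/2 \<longrightarrow> Nbar_th (2 * pi) f < \<infinity>)"
proof -
  interpret smooth_decaying_function f C L \<alpha> \<epsilon>
    using assms by unfold_locales auto
  show ?thesis
    using Nbar_finite[OF pos_freq alpha_gt] Nbar_th_finite[OF pos_freq _ alpha_gt] normalised by simp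
qed

end
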